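(* Let $\mathcal X\subset\mathbb R^d$ be a finite set with Euclidean distance $d$, and let $C=\{C_1,\dots,C_k\}$ be a center-based clustering of $\mathcal X$ satisfying the $\gamma$-margin property, where the center $\mu_i$ of $C_i$ is its center of mass $\frac1{|C_i|}\sum_{x\in C_i}x$. Assume $\delta\in(0,1)$ and $\gamma>1$. Then with probability at least $1-\delta$, the algorithm described in the context, run with a $C$-oracle, outputs $C$ (as a partition of $\mathcal X$).
   Context: A clustering $C=\{C_1,\dots,C_k\}$ is center-based with centers $\mu_1,\dots,\mu_k$ if $x\in C_i\iff i=\arg\min_j d(x,\mu_j)$. It satisfies the $\gamma$-margin property if for all $i$, all $x\in C_i$, $y\in\mathcal X\setminus C_i$: $\gamma d(x,\mu_i)<d(y,\mu_i)$. A $C$-oracle answers same-cluster queries ($\mathcal O(x_1,x_2)$ = true iff $x_1,x_2$ lie in the same cluster of $C$) and cluster-assignment queries ($\mathcal O(x)=i$ iff $x\in C_i$). The algorithm (input $\mathcal X$, oracle, $k$, $\delta$; $\gamma$ known) sets $S_1=\mathcal X$, output $\mathcal C=\emptyset$, and $\eta=\beta\frac{\log k+\log(1/\delta)}{(\gamma-1)^4}$, where $\beta$ is a fixed absolute constant (the constant of a generalized Hoeffding inequality for bounded i.i.d. random vectors in a Hilbert space). For $i=1,\dots,k$: Phase 1: draw $l=k\eta+1$ elements $Z$ independently and uniformly at random from $S_i$; ask a cluster-assignment query for each; let $Z_t=\{x\in Z:\mathcal O(x)=t\}$, $p=\arg\max_t|Z_t|$, and $\mu_p'=\frac1{|Z_p|}\sum_{x\in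 Z_p}x$. Phase 2: sort $S_i$ in increasing order of $d(x,\mu_p')$ and, by binary search using same-cluster queries, find the radius $r_i$ such that the elements of $S_i$ in cluster $p$ are exactly those with $d(x,\mu_p')\le r_i$ (assuming such a radius exists); set $C_p'=\{x\in S_i: d(x,\mu_p')\le r_i\}$, $S_{i+1}=S_i\setminus C_p'$, $\mathcal C=\mathcal C\cup\{C_p'\}$. Output $\mathcal C$. *)

theory Defs
  imports "HOL-Probability.Probability"
begin

type_synonym point = "nat \<Rightarrow> real"

text \<open>Points of R^d are represented as functions nat => real vanishing outside {0..<d}.\<close>
definition Rd :: "nat \<Rightarrow> point set" where
  "Rd d = {x. \<forall>i\<ge>d. x i = 0}"

definition edist :: "nat \<Rightarrow> point \<Rightarrow> point \<Rightarrow> real" where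
  "edist d x y = sqrt (\<Sum>i<d. (x i - y i)^2)"

definition center_of_mass :: "point set \<Rightarrow> point" where
  "center_of_mass A = (\<lambda>i. (\<Sum>x\<in>A. x i) / real (card A))"

definition list_mean :: "point list \<Rightarrow> point" where
  "list_mean xs = (\<lambda>i. (\<Sum>x\<leftarrow>xs. x i) / real (length xs))"

text \<open>The clustering is given by a labelling cl : X -> {1..k}; cluster C_i = {x in X. cl x = i}.\<close>
definition cluster :: "point set \<Rightarrow> (point \<Rightarrow> nat) \<Rightarrow> nat \<Rightarrow> point set" where
  "cluster X cl i = {x\<in>X. cl x = i}"

definition clustering :: "point set \<Rightarrow> (point \<Rightarrow> nat) \<Rightarrow> nat \<Rightarrow> point set set" where
  "clustering X cl k = {cluster X cl i | i. i \<in> {1..k}}"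

definition center_based ::
  "nat \<Rightarrow> point set \<Rightarrow> (point \<Rightarrow> nat) \<Rightarrow> nat \<Rightarrow> (nat \<Rightarrow> point) \<Rightarrow> bool" where
  "center_based d X cl k \<mu> \<longleftrightarrow>
     (\<forall>x\<in>X. \<forall>i\<in>{1..k}. x \<in> cluster X cl i \<longleftrightarrow>
        (\<forall>j\<in>{1..k}. j \<noteq> i \<longrightarrow> edist d x (\<mu> i) < edist d x (\<mu> j)))"

definition margin_property ::
  "nat \<Rightarrow> real \<Rightarrow> point set \<Rightarrow> (point \<Rightarrow> nat) \<Rightarrow> nat \<Rightarrow> (nat \<Rightarrow> point) \<Rightarrow> bool" where
  "margin_property d \<gamma> X cl k \<mu> \<longleftrightarrow>
     (\<forall>i\<in>{1..k}. \<forall>x\<in>cluster X cl i. \<forall>y\<in>X - cluster X cl i.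
        \<gamma> * edist d x (\<mu> i) < edist d y (\<mu> i))"

definition label_count :: "(point \<Rightarrow> nat) \<Rightarrow> point list \<Rightarrow> nat \<Rightarrow> nat" where
  "label_count cl Z t = length (filter (\<lambda>x. cl x = t) Z)"

definition argmax_labels :: "(point \<Rightarrow> nat) \<Rightarrow> point list \<Rightarrow> nat set" where
  "argmax_labels cl Z = {t. \<forall>s. label_count cl Z s \<le> label_count cl Z t}"

primrec sample_list :: "'a set \<Rightarrow> nat \<Rightarrow> 'a list pmf" where
  "sample_list S 0 = return_pmf []"
| "sample_list S (Suc n) =
     bind_pmf (pmf_of_set S) (\<lambda>x. map_pmf (\<lambda>xs. x # xs) (sample_list S n))"

text \<open>Phase 2 (specification of the binary search): returns the ball C_p' if a radius
  separating cluster p inside S exists, and None (failure) otherwise.\<close>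
definition phase2 :: "nat \<Rightarrow> (point \<Rightarrow> nat) \<Rightarrow> point set \<Rightarrow> nat \<Rightarrow> point \<Rightarrow> point set option" where
  "phase2 d cl S p \<mu>' =
     (if \<exists>r. {x\<in>S. cl x = p} = {x\<in>S. edist d x \<mu>' \<le> r}
      then Some {x\<in>S. edist d x \<mu>' \<le> (SOME r. {x\<in>S. cl x = p} = {x\<in>S. edist d x \<mu>' \<le> r})}
      else None)"

text \<open>One iteration given the sample Z; tb is the tie-breaking rule of the argmax.\<close>
definition iteration :: "nat \<Rightarrow> (point \<Rightarrow> nat) \<Rightarrow> (point list \<Rightarrow> nat) \<Rightarrow> point set \<Rightarrow> point list
    \<Rightarrow> point set option" where
  "iteration d cl tb S Z =
     (let p = tb Z; \<mu>' = list_mean (filter (\<lambda>x. cl x = p) Z) in phase2 d cl S p \<mu>')"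

text \<open>run d cl tb l n S: remaining n iterations on the current set S; None = failure.\<close>
fun run :: "nat \<Rightarrow> (point \<Rightarrow> nat) \<Rightarrow> (point list \<Rightarrow> nat) \<Rightarrow> nat \<Rightarrow> nat \<Rightarrow> point set
    \<Rightarrow> point set set option pmf" where
  "run d cl tb l 0 S = return_pmf (Some {})"
| "run d cl tb l (Suc n) S =
     (if S = {} then return_pmf None else
      bind_pmf (sample_list S l) (\<lambda>Z.
        case iteration d cl tb S Z of
          None \<Rightarrow> return_pmf None
        | Some C' \<Rightarrow> map_pmf (map_option (insert C')) (run d cl tb l n (S - C'))))"

definition eta :: "real \<Rightarrow> nat \<Rightarrow> real \<Rightarrow> real \<Rightarrow> real" where
  "eta \<beta> k \<delta> \<gamma> = \<beta> * (ln (real k) + ln (1 / \<delta>)) / (\<gamma> - 1) ^ 4"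

definition algorithm :: "real \<Rightarrow> nat \<Rightarrow> point set \<Rightarrow> (point \<Rightarrow> nat) \<Rightarrow> (point list \<Rightarrow> nat)
    \<Rightarrow> nat \<Rightarrow> real \<Rightarrow> real \<Rightarrow> point set set option pmf" where
  "algorithm \<beta> d X cl tb k \<delta> \<gamma> =
     run d cl tb (k * nat \<lceil>eta \<beta> k \<delta> \<gamma>\<rceil> + 1) k X"

end

theory Submission
  imports Defs
begin

text \<open>
  Consider the iteration in which the clusters with labels in \<open>R\<close> remain. The tie-breaking rule
  picks a majority label \<open>p\<close>, which by pigeonhole occurs at least \<open>\<eta> + 1\<close> times among the
  \<open>k\<eta> + 1\<close> draws. Those draws are i.i.d. uniform on \<open>C\<^sub>p\<close>, so a Hoeffding bound for bounded
  vectors puts their mean within \<open>\<epsilon> r\<^sub>p\<close> of \<open>\<mu>\<^sub>p\<close>, where \<open>r\<^sub>p\<close> is the radius of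
  \<open>C\<^sub>p\<close> and \<open>\<epsilon> = min 1 ((\<gamma> - 1)/2)\<close>, except with probability
  \<open>exp (1/2 - (\<eta> + 1) \<epsilon>\<^sup>2/4)\<close>. The margin property and the triangle inequality then show
  that \<open>C\<^sub>p\<close> is exactly the ball of radius \<open>(1 + \<epsilon>) r\<^sub>p\<close> around the estimate, so Phase 2 splits
  off \<open>C\<^sub>p\<close>. A union bound over the labels gives failure probability at most \<open>\<delta>/k\<close> per
  iteration for \<open>\<beta> = 256\<close>, and a union bound over the \<open>k\<close> iterations gives \<open>1 - \<delta>\<close>.
\<close>

section \<open>Expectation over uniform i.i.d. samples\<close>

text \<open>The expectation of \<open>f\<close> over \<open>m\<close> independent uniform draws from \<open>C\<close>, i.e. under
  \<open>sample_list C m\<close> (see \<open>pmf_bind_sample_list\<close>), unfolded along the first draw.\<close>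

fun sample_expectation :: "'a set \<Rightarrow> nat \<Rightarrow> ('a list \<Rightarrow> real) \<Rightarrow> real" where
  "sample_expectation C 0 f = f []"
| "sample_expectation C (Suc m) f =
     (\<Sum>x\<in>C. sample_expectation C m (\<lambda>W. f (x # W))) / real (card C)"

lemma sample_expectation_cong:
  "(\<And>W. length W = m \<Longrightarrow> set W \<subseteq> C \<Longrightarrow> f W = g W) \<Longrightarrow>
     sample_expectation C m f = sample_expectation C m g"
proof (induction m arbitrary: f g)
  case (Suc m)
  have "sample_expectation C m (\<lambda>W. f (x # W)) = sample_expectation C m (\<lambda>W. g (x # W))"
    if "x \<in> C" for x
    by (rule Suc.IH) (use Suc.prems that in auto)
  then show ?case by (simp cong: sum.cong)
qed simp

lemma sample_expectation_mono:
  "(\<And>W. length W = m \<Longrightarrow> set W \<subseteq> C \<Longrightarrow> f W \<le> g W) \<Longrightarrow>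
     sample_expectation C m f \<le> sample_expectation C m g"
proof (induction m arbitrary: f g)
  case (Suc m)
  have "sample_expectation C m (\<lambda>W. f (x # W)) \<le> sample_expectation C m (\<lambda>W. g (x # W))"
    if "x \<in> C" for x
    by (rule Suc.IH) (use Suc.prems that in auto)
  then show ?case by (simp add: sum_mono divide_right_mono)
qed simp

lemma sample_expectation_const:
  "finite C \<Longrightarrow> C \<noteq> {} \<Longrightarrow> sample_expectation C m (\<lambda>_. c) = c"
  by (induction m) auto

lemma sample_expectation_sum:
  "sample_expectation C m (\<lambda>W. \<Sum>x\<in>A. f x W) = (\<Sum>x\<in>A. sample_expectation C m (f x))"
proof (induction m arbitrary: f)
  case (Suc m)
  then show ?case by (simp add: sum_divide_distrib sum.swap[of _ C])
qed simp

lemma sample_expectation_cmult: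
  "sample_expectation C m (\<lambda>W. c * f W) = c * sample_expectation C m f"
  by (induction m arbitrary: f) (simp_all add: sum_distrib_left)

lemma sample_expectation_diff:
  "sample_expectation C m (\<lambda>W. f W - g W) = sample_expectation C m f - sample_expectation C m g"
  by (induction m arbitrary: f g) (simp_all add: sum_subtractf diff_divide_distrib)

lemma pmf_bind_sample_list:
  assumes "finite C" "C \<noteq> {}"
  shows "pmf (bind_pmf (sample_list C m) F) y = sample_expectation C m (\<lambda>Z. pmf (F Z) y)"
proof (induction m arbitrary: F)
  case (Suc m)
  have "bind_pmf (sample_list C (Suc m)) F =
        bind_pmf (pmf_of_set C) (\<lambda>x. bind_pmf (sample_list C m) (\<lambda>Z. F (x # Z)))"
    by (simp add: bind_assoc_pmf bind_map_pmf)
  moreover have "pmf (bind_pmf (pmf_of_set C) G) y = (\<Sum>x\<in>C. pmf (G x) y) / real (card C)" for G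
    using assms by (simp add: pmf_bind integral_pmf_of_set)
  ultimately show ?case
    by (simp add: Suc.IH)
qed (simp add: bind_return_pmf)

lemma prob_sample_list:
  assumes "finite C" "C \<noteq> {}"
  shows "measure_pmf.prob (sample_list C m) A = sample_expectation C m (indicator A)"
proof -
  have "measure_pmf.prob (sample_list C m) A
      = pmf (bind_pmf (sample_list C m) (\<lambda>Z. return_pmf (Z \<in> A))) True"
    by (simp add: pmf_map vimage_def flip: map_pmf_def)
  also have "\<dots> = sample_expectation C m (indicator A)"
    by (simp add: pmf_bind_sample_list[OF assms] indicator_def[abs_def])
  finally show ?thesis .
qed

lemma pmf_bind_sample_list_ge:
  assumes "finite S" "S \<noteq> {}" "a \<le> 1" "\<And>Z. Z \<notin> B \<Longrightarrow> a \<le> pmf (F Z) y"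
  shows "a - measure_pmf.prob (sample_list S l) B \<le> pmf (bind_pmf (sample_list S l) F) y"
proof -
  have "a - measure_pmf.prob (sample_list S l) B = sample_expectation S l (\<lambda>Z. a - indicator B Z)"
    using assms(1,2) by (simp add: sample_expectation_diff sample_expectation_const prob_sample_list)
  also have "\<dots> \<le> sample_expectation S l (\<lambda>Z. pmf (F Z) y)"
  proof (rule sample_expectation_mono)
    fix Z
    show "a - indicator B Z \<le> pmf (F Z) y"
      using assms(3) assms(4)[of Z] pmf_nonneg[of "F Z" y] by (cases "Z \<in> B") (auto simp del: pmf_nonneg)
  qed
  finally show ?thesis
    using assms(1,2) by (simp add: pmf_bind_sample_list)
qed

lemma sample_expectation_filter_Suc:
  assumes "finite S" "C = {x\<in>S. P x}"
  shows "sample_expectation S (Suc l) (\<lambda>Z. g (filter P Z))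
    = ((\<Sum>x\<in>C. sample_expectation S l (\<lambda>Z. g (x # filter P Z)))
       + real (card (S - C)) * sample_expectation S l (\<lambda>Z. g (filter P Z))) / real (card S)"
proof -
  have "sample_expectation S l (\<lambda>Z. g (filter P (x # Z)))
      = (if P x then sample_expectation S l (\<lambda>Z. g (x # filter P Z))
         else sample_expectation S l (\<lambda>Z. g (filter P Z)))" for x
    by simp
  then have "sample_expectation S (Suc l) (\<lambda>Z. g (filter P Z))
      = (\<Sum>x\<in>S. if P x then sample_expectation S l (\<lambda>Z. g (x # filter P Z))
                 else sample_expectation S l (\<lambda>Z. g (filter P Z))) / real (card S)"
    by (simp only: sample_expectation.simps)
  moreover have "S \<inter> {x. P x} = C" "S \<inter> - {x. P x} = S - C"
    using assms(2) by auto
  ultimately show ?thesis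
    using assms(1) by (simp add: sum.If_cases)
qed

lemma sample_expectation_filter_le:
  assumes "finite S" "C = {x\<in>S. P x}" "C \<noteq> {}" "\<And>m. sample_expectation C m g \<le> B"
  shows "sample_expectation S l (\<lambda>Z. g (filter P Z)) \<le> B"
  using assms(4)
proof (induction l arbitrary: g)
  case 0
  then show ?case by (metis sample_expectation.simps(1) filter.simps(1))
next
  case (Suc l)
  have C: "finite C" "0 < card C"
    using assms by (auto simp: card_gt_0_iff)
  define h where "h W = (1 / real (card C)) * (\<Sum>x\<in>C. g (x # W))" for W
  have "sample_expectation C m h \<le> B" for m
    using Suc.prems[of "Suc m"]
    unfolding h_def sample_expectation_cmult sample_expectation_sum by simp
  then have h: "sample_expectation S l (\<lambda>Z. h (filter P Z)) \<le> B"
    by (rule Suc.IH)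
  have "(\<Sum>x\<in>C. sample_expectation S l (\<lambda>Z. g (x # filter P Z)))
      = real (card C) * sample_expectation S l (\<lambda>Z. h (filter P Z))"
    using C unfolding h_def sample_expectation_cmult sample_expectation_sum by simp
  also have "\<dots> \<le> real (card C) * B"
    using h by (simp add: mult_left_mono)
  finally have "sample_expectation S (Suc l) (\<lambda>Z. g (filter P Z))
      \<le> (real (card C) * B + real (card (S - C)) * B) / real (card S)"
    unfolding sample_expectation_filter_Suc[OF assms(1,2)] using Suc.IH[OF Suc.prems]
    by (intro divide_right_mono add_mono mult_left_mono) auto
  also have "\<dots> = B * ((real (card C) + real (card (S - C))) / real (card S))"
    by (simp add: algebra_simps)
  also have "real (card C) + real (card (S - C)) = real (card S)"
    using assms(1,2) card_Diff_subset[of C S] card_mono[of S C] by fastforce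
  also have "B * (real (card S) / real (card S)) = B"
    using assms(1-3) by (auto simp: card_gt_0_iff)
  finally show ?case .
qed

section \<open>Euclidean distance and sample means\<close>

lemma edist_eq_L2_set: "edist d x y = L2_set (\<lambda>i. x i - y i) {..<d}"
  by (simp add: edist_def L2_set_def)

lemma edist_nonneg: "0 \<le> edist d x y"
  by (simp add: edist_eq_L2_set)

lemma edist_commute: "edist d x y = edist d y x"
  by (simp add: edist_def power2_commute)

lemma edist_triangle: "edist d x z \<le> edist d x y + edist d y z"
  using L2_set_triangle_ineq[of "\<lambda>i. x i - y i" "\<lambda>i. y i - z i" "{..<d}"]
  by (simp add: edist_eq_L2_set)

lemma L2_set_sum_list_le: "L2_set (\<lambda>i. \<Sum>w\<leftarrow>W. f w i) A \<le> (\<Sum>w\<leftarrow>W. L2_set (f w) A)"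
proof (induction W)
  case (Cons a W)
  have "L2_set (\<lambda>i. f a i + (\<Sum>w\<leftarrow>W. f w i)) A \<le> L2_set (f a) A + L2_set (\<lambda>i. \<Sum>w\<leftarrow>W. f w i) A"
    by (rule L2_set_triangle_ineq)
  with Cons show ?case by simp
qed (simp add: L2_set_def)

lemma edist_list_mean:
  assumes "W \<noteq> []"
  shows "edist d (list_mean W) c = L2_set (\<lambda>i. \<Sum>w\<leftarrow>W. w i - c i) {..<d} / real (length W)"
proof -
  have "list_mean W i - c i = (1 / real (length W)) * (\<Sum>w\<leftarrow>W. w i - c i)" for i
    using assms by (simp add: list_mean_def sum_list_subtractf sum_list_triv field_simps)
  then have "edist d (list_mean W) c
      = L2_set (\<lambda>i. (1 / real (length W)) * (\<Sum>w\<leftarrow>W. w i - c i)) {..<d}"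
    by (simp only: edist_eq_L2_set)
  also have "\<dots> = (1 / real (length W)) * L2_set (\<lambda>i. \<Sum>w\<leftarrow>W. w i - c i) {..<d}"
    by (subst L2_set_right_distrib) auto
  finally show ?thesis
    by simp
qed

lemma edist_list_mean_le:
  assumes "W \<noteq> []" "\<forall>w\<in>set W. edist d w c \<le> r"
  shows "edist d (list_mean W) c \<le> r"
proof -
  have "L2_set (\<lambda>i. \<Sum>w\<leftarrow>W. w i - c i) {..<d} \<le> (\<Sum>w\<leftarrow>W. edist d w c)"
    using L2_set_sum_list_le[of "\<lambda>w i. w i - c i" W "{..<d}"] by (simp add: edist_eq_L2_set)
  also have "\<dots> \<le> real (length W) * r"
    using sum_list_mono[of W "\<lambda>w. edist d w c" "\<lambda>_. r"] assms(2) by (simp add: sum_list_triv)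
  finally show ?thesis
    using assms(1) by (simp add: edist_list_mean field_simps)
qed

section \<open>Concentration of the sample mean\<close>

lemma sum_exp_le_Hoeffding:
  fixes Y :: "'a \<Rightarrow> real"
  assumes "finite C" "C \<noteq> {}" "\<forall>x\<in>C. \<bar>Y x\<bar> \<le> b" "(\<Sum>x\<in>C. Y x) = 0"
  shows "(\<Sum>x\<in>C. exp (Y x)) \<le> real (card C) * exp (b^2 / 2)"
proof -
  interpret interval_bounded_random_variable "measure_pmf (pmf_of_set C)" Y "-b" b
    by unfold_locales (use assms in \<open>auto simp: AE_measure_pmf_iff abs_le_iff\<close>)
  have "measure_pmf.expectation (pmf_of_set C) Y = 0"
    using assms by (simp add: integral_pmf_of_set)
  then have "(\<integral>\<^sup>+x. exp (1 * Y x) \<partial>measure_pmf (pmf_of_set C))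
      \<le> ennreal (exp (1\<^sup>2 * (b - - b)\<^sup>2 / 8))"
    by (intro Hoeffdings_lemma_nn_integral_0) auto
  moreover have "(\<integral>\<^sup>+x. exp (1 * Y x) \<partial>measure_pmf (pmf_of_set C))
      = ennreal ((\<Sum>x\<in>C. exp (Y x)) / card C)"
    using assms by (simp add: nn_integral_pmf_of_set divide_ennreal card_gt_0_iff
        ennreal_of_nat_eq_real_of_nat sum_nonneg)
  ultimately have "(\<Sum>x\<in>C. exp (Y x)) / card C \<le> exp (b^2 / 2)"
    by (simp add: power2_eq_square)
  then show ?thesis
    using assms by (simp add: field_simps card_gt_0_iff)
qed

definition sqnorm :: "nat \<Rightarrow> point \<Rightarrow> real" where
  "sqnorm d v = (\<Sum>i<d. (v i)^2)"

definition deviation_sum :: "point \<Rightarrow> point list \<Rightarrow> point" where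
  "deviation_sum \<mu> W = (\<lambda>i. \<Sum>w\<leftarrow>W. w i - \<mu> i)"

lemma sqnorm_nonneg: "0 \<le> sqnorm d v"
  by (simp add: sqnorm_def sum_nonneg)

lemma sqnorm_add:
  "sqnorm d (\<lambda>i. u i + v i) = sqnorm d u + 2 * (\<Sum>i<d. u i * v i) + sqnorm d v"
  by (simp add: sqnorm_def power2_sum sum.distrib sum_distrib_left mult.assoc)

lemma edist_eq_sqrt_sqnorm: "edist d x y = sqrt (sqnorm d (\<lambda>i. x i - y i))"
  by (simp add: edist_def sqnorm_def)

lemma abs_inner_le_sqnorm:
  "\<bar>\<Sum>i<d. u i * v i\<bar> \<le> sqrt (sqnorm d u) * sqrt (sqnorm d v)"
proof -
  have "\<bar>\<Sum>i<d. u i * v i\<bar> \<le> (\<Sum>i<d. \<bar>u i\<bar> * \<bar>v i\<bar>)"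
    by (rule order_trans[OF sum_abs]) (simp add: abs_mult)
  also have "\<dots> \<le> L2_set u {..<d} * L2_set v {..<d}"
    by (rule L2_set_mult_ineq)
  finally show ?thesis
    by (simp add: sqnorm_def L2_set_def)
qed

lemma deviation_sum_Cons: "deviation_sum \<mu> (x # W) = (\<lambda>i. (x i - \<mu> i) + deviation_sum \<mu> W i)"
  by (simp add: deviation_sum_def)

lemma edist_list_mean_deviation_sum:
  "W \<noteq> [] \<Longrightarrow> edist d (list_mean W) \<mu> = sqrt (sqnorm d (deviation_sum \<mu> W)) / real (length W)"
  by (simp add: edist_list_mean L2_set_def sqnorm_def deviation_sum_def)

lemma sum_exp_sqnorm_shift_le:
  assumes "finite C" "C \<noteq> {}" "\<forall>i. (\<Sum>x\<in>C. x i - \<mu> i) = 0" "\<forall>x\<in>C. edist d x \<mu> \<le> r"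
    and "0 \<le> r" "0 \<le> \<theta>"
  shows "(\<Sum>x\<in>C. exp (\<theta> * sqnorm d (\<lambda>i. (x i - \<mu> i) + s i)))
         \<le> real (card C) * exp (\<theta> * r^2 + (\<theta> + 2 * \<theta>^2 * r^2) * sqnorm d s)"
proof -
  define Y where "Y x = 2 * \<theta> * (\<Sum>i<d. (x i - \<mu> i) * s i)" for x
  define b where "b = 2 * \<theta> * r * sqrt (sqnorm d s)"
  have Y_bound: "\<bar>Y x\<bar> \<le> b" if "x \<in> C" for x
  proof -
    have "\<bar>\<Sum>i<d. (x i - \<mu> i) * s i\<bar> \<le> edist d x \<mu> * sqrt (sqnorm d s)"
      using abs_inner_le_sqnorm[where u="\<lambda>i. x i - \<mu> i" and v=s and d=d] by (simp add: edist_eq_sqrt_sqnorm)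
    also have "\<dots> \<le> r * sqrt (sqnorm d s)"
      using assms that by (intro mult_right_mono) (auto simp: sqnorm_nonneg)
    finally show ?thesis
      using assms by (simp add: Y_def b_def abs_mult mult_left_mono mult.assoc)
  qed
  have Y_sum: "(\<Sum>x\<in>C. Y x) = 0"
  proof -
    have "(\<Sum>x\<in>C. Y x) = 2 * \<theta> * (\<Sum>i<d. s i * (\<Sum>x\<in>C. x i - \<mu> i))"
      unfolding Y_def by (simp add: sum_distrib_left sum_distrib_right sum.swap[of _ C] mult_ac)
    then show ?thesis using assms(3) by simp
  qed
  have pointwise: "exp (\<theta> * sqnorm d (\<lambda>i. (x i - \<mu> i) + s i))
      \<le> exp (\<theta> * r^2 + \<theta> * sqnorm d s) * exp (Y x)" if "x \<in> C" for x
  proof -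
    have "sqnorm d (\<lambda>i. x i - \<mu> i) = (edist d x \<mu>)^2"
      by (simp add: edist_eq_sqrt_sqnorm sqnorm_nonneg)
    also have "\<dots> \<le> r^2"
      using assms that by (intro power_mono) (auto simp: edist_nonneg)
    finally have "sqnorm d (\<lambda>i. x i - \<mu> i) \<le> r^2" .
    moreover have "\<theta> * sqnorm d (\<lambda>i. (x i - \<mu> i) + s i)
        = \<theta> * sqnorm d (\<lambda>i. x i - \<mu> i) + Y x + \<theta> * sqnorm d s"
      unfolding sqnorm_add[of d "\<lambda>i. x i - \<mu> i" s] Y_def by (simp add: algebra_simps)
    ultimately have "\<theta> * sqnorm d (\<lambda>i. (x i - \<mu> i) + s i) \<le> (\<theta> * r^2 + \<theta> * sqnorm d s) + Y x"
      using assms(6) by (simp add: mult_left_mono)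
    then show ?thesis by (simp flip: exp_add)
  qed
  have "(\<Sum>x\<in>C. exp (\<theta> * sqnorm d (\<lambda>i. (x i - \<mu> i) + s i)))
      \<le> exp (\<theta> * r^2 + \<theta> * sqnorm d s) * (\<Sum>x\<in>C. exp (Y x))"
    using pointwise by (simp add: sum_distrib_left sum_mono)
  also have "\<dots> \<le> exp (\<theta> * r^2 + \<theta> * sqnorm d s) * (real (card C) * exp (b^2 / 2))"
    using assms Y_bound Y_sum by (intro mult_left_mono sum_exp_le_Hoeffding) auto
  also have "b^2 / 2 = 2 * \<theta>^2 * r^2 * sqnorm d s"
    by (simp add: b_def power_mult_distrib sqnorm_nonneg)
  finally show ?thesis
    by (simp add: algebra_simps flip: exp_add)
qed

lemma exp_sqnorm_parameter_step:
  fixes \<theta> r :: real and m :: nat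
  assumes "0 \<le> \<theta>" "4 * \<theta> * r^2 * (m + 1) \<le> 1"
  defines "\<theta>' \<equiv> \<theta> + 2 * \<theta>^2 * r^2"
  shows "4 * \<theta>' * r^2 * m \<le> 1" and "\<theta> * r^2 + 2 * \<theta>' * r^2 * m \<le> 2 * \<theta> * r^2 * (m + 1)"
proof -
  define a where "a = 4 * \<theta> * r^2"
  have a: "0 \<le> a" "a * m \<le> 1 - a"
    using assms by (auto simp: a_def algebra_simps)
  have "a * (a * m) \<le> a * (1 - a)"
    by (rule mult_left_mono[OF a(2) a(1)])
  then have a_sq: "a * (a * m) \<le> a"
    by (simp add: algebra_simps) (use mult_nonneg_nonneg[OF a(1) a(1)] in linarith)
  have \<theta>': "4 * \<theta>' * r^2 = a + a^2 / 2"
    by (simp add: \<theta>'_def a_def power2_eq_square algebra_simps)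
  have step: "4 * \<theta>' * r^2 * m = a * m + a * (a * m) / 2"
    by (simp only: \<theta>') (simp add: power2_eq_square algebra_simps)
  then show "4 * \<theta>' * r^2 * m \<le> 1"
    using a a_sq by linarith
  have "\<theta> * r^2 = a / 4" "2 * \<theta> * r^2 * (m + 1) = a * m / 2 + a / 2"
    by (simp_all add: a_def algebra_simps)
  then show "\<theta> * r^2 + 2 * \<theta>' * r^2 * m \<le> 2 * \<theta> * r^2 * (m + 1)"
    using step a_sq by linarith
qed

text \<open>Moment generating function of the squared norm of a sum of centred draws: peeling off one
  draw costs a factor \<open>exp (\<theta> r\<^sup>2)\<close> and, by Hoeffding's lemma on the cross term, raises
  \<open>\<theta>\<close> to \<open>\<theta> + 2\<theta>\<^sup>2r\<^sup>2\<close>; this growth stays harmless while \<open>4\<theta>r\<^sup>2m \<le> 1\<close>.\<close>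

lemma sample_expectation_exp_sqnorm_le:
  assumes C: "finite C" "C \<noteq> {}" "\<forall>i. (\<Sum>x\<in>C. x i - \<mu> i) = 0" "\<forall>x\<in>C. edist d x \<mu> \<le> r"
    and "0 \<le> r"
  shows "0 \<le> \<theta> \<Longrightarrow> 4 * \<theta> * r^2 * m \<le> 1 \<Longrightarrow>
    sample_expectation C m (\<lambda>W. exp (\<theta> * sqnorm d (deviation_sum \<mu> W))) \<le> exp (2 * \<theta> * r^2 * m)"
proof (induction m arbitrary: \<theta>)
  case 0
  then show ?case by (simp add: deviation_sum_def sqnorm_def)
next
  case (Suc m)
  define \<theta>' where "\<theta>' = \<theta> + 2 * \<theta>^2 * r^2"
  have \<theta>': "0 \<le> \<theta>'" "4 * \<theta>' * r^2 * m \<le> 1" "\<theta> * r^2 + 2 * \<theta>' * r^2 * m \<le> 2 * \<theta> * r^2 * Suc m"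
    using exp_sqnorm_parameter_step[of \<theta> r m] Suc.prems by (auto simp: \<theta>'_def)
  have "sample_expectation C (Suc m) (\<lambda>W. exp (\<theta> * sqnorm d (deviation_sum \<mu> W)))
      = sample_expectation C m (\<lambda>W. (1 / real (card C)) *
          (\<Sum>x\<in>C. exp (\<theta> * sqnorm d (deviation_sum \<mu> (x # W)))))"
    unfolding sample_expectation_cmult sample_expectation_sum by simp
  also have "\<dots> \<le> sample_expectation C m (\<lambda>W. exp (\<theta> * r^2 + \<theta>' * sqnorm d (deviation_sum \<mu> W)))"
  proof (rule sample_expectation_mono)
    fix W :: "point list"
    have "(\<Sum>x\<in>C. exp (\<theta> * sqnorm d (deviation_sum \<mu> (x # W))))
       \<le> real (card C) * exp (\<theta> * r^2 + \<theta>' * sqnorm d (deviation_sum \<mu> W))"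
      unfolding deviation_sum_Cons \<theta>'_def
      by (rule sum_exp_sqnorm_shift_le) (use C assms(5) Suc.prems in auto)
    then show "(1 / real (card C)) * (\<Sum>x\<in>C. exp (\<theta> * sqnorm d (deviation_sum \<mu> (x # W))))
       \<le> exp (\<theta> * r^2 + \<theta>' * sqnorm d (deviation_sum \<mu> W))"
      using C by (simp add: field_simps card_gt_0_iff)
  qed
  also have "\<dots> = exp (\<theta> * r^2) * sample_expectation C m (\<lambda>W. exp (\<theta>' * sqnorm d (deviation_sum \<mu> W)))"
    by (simp add: exp_add sample_expectation_cmult)
  also have "\<dots> \<le> exp (\<theta> * r^2) * exp (2 * \<theta>' * r^2 * m)"
    using Suc.IH[OF \<theta>'(1,2)] by simp
  also have "\<dots> \<le> exp (2 * \<theta> * r^2 * Suc m)"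
    using \<theta>'(3) by (simp flip: exp_add)
  finally show ?case .
qed

lemma sample_expectation_far_mean_le:
  assumes C: "finite C" "C \<noteq> {}" "\<forall>i. (\<Sum>x\<in>C. x i - \<mu> i) = 0" "\<forall>x\<in>C. edist d x \<mu> \<le> r"
    and "0 < r" "1 \<le> m" "0 < \<epsilon>"
  shows "sample_expectation C m (\<lambda>W. of_bool (\<epsilon> * r < edist d (list_mean W) \<mu>))
    \<le> exp (1/2 - m * \<epsilon>^2 / 4)"
proof -
  define \<theta> where "\<theta> = 1 / (4 * r^2 * m)"
  have \<theta>: "0 \<le> \<theta>" "4 * \<theta> * r^2 * m \<le> 1" "2 * \<theta> * r^2 * m = 1/2"
    "\<theta> * (m * \<epsilon> * r)^2 = m * \<epsilon>^2 / 4"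
    using assms(5,6) by (simp_all add: \<theta>_def power2_eq_square field_simps)
  have "sample_expectation C m (\<lambda>W. of_bool (\<epsilon> * r < edist d (list_mean W) \<mu>))
      \<le> sample_expectation C m (\<lambda>W. exp (- (m * \<epsilon>^2 / 4)) * exp (\<theta> * sqnorm d (deviation_sum \<mu> W)))"
  proof (rule sample_expectation_mono)
    fix W :: "point list"
    assume "length W = m"
    then have W: "W \<noteq> []" "real (length W) = m"
      using assms(6) by auto
    show "of_bool (\<epsilon> * r < edist d (list_mean W) \<mu>)
        \<le> exp (- (m * \<epsilon>^2 / 4)) * exp (\<theta> * sqnorm d (deviation_sum \<mu> W))"
    proof (cases "\<epsilon> * r < edist d (list_mean W) \<mu>")
      case True
      then have "m * \<epsilon> * r < sqrt (sqnorm d (deviation_sum \<mu> W))"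
        using W assms(6) by (simp add: edist_list_mean_deviation_sum field_simps)
      then have "(m * \<epsilon> * r)^2 < (sqrt (sqnorm d (deviation_sum \<mu> W)))^2"
        using assms(5-7) by (intro power_strict_mono) auto
      then have "(m * \<epsilon> * r)^2 \<le> sqnorm d (deviation_sum \<mu> W)"
        by (simp add: sqnorm_nonneg)
      then have "m * \<epsilon>^2 / 4 \<le> \<theta> * sqnorm d (deviation_sum \<mu> W)"
        using \<theta>(1,4) mult_left_mono by metis
      then show ?thesis
        using True by (simp flip: exp_add)
    qed simp
  qed
  also have "\<dots> \<le> exp (- (m * \<epsilon>^2 / 4)) * exp (2 * \<theta> * r^2 * m)"
    using sample_expectation_exp_sqnorm_le[OF C less_imp_le[OF assms(5)] \<theta>(1,2)]
    by (simp add: sample_expectation_cmult)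
  finally show ?thesis
    by (simp add: \<theta>(3) flip: exp_add)
qed

section \<open>Analysis of the algorithm\<close>

lemma center_of_mass_deviation_sum:
  "finite C \<Longrightarrow> C \<noteq> {} \<Longrightarrow> (\<Sum>x\<in>C. x i - center_of_mass C i) = 0"
  by (simp add: sum_subtractf center_of_mass_def card_gt_0_iff)

lemma sum_label_count:
  assumes "finite R" "\<forall>z\<in>set Z. cl z \<in> R"
  shows "(\<Sum>t\<in>R. label_count cl Z t) = length Z"
  using assms(2)
proof (induction Z)
  case (Cons z Z)
  have "(\<Sum>t\<in>R. label_count cl (z # Z) t) = (\<Sum>t\<in>R. of_bool (cl z = t) + label_count cl Z t)"
    by (rule sum.cong) (auto simp: label_count_def)
  with Cons assms(1) show ?case
    by (simp add: sum.distrib)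
qed (simp add: label_count_def)

lemma phase2_eq_Some:
  assumes "{x\<in>S. cl x = p} = {x\<in>S. edist d x \<mu>' \<le> r}"
  shows "phase2 d cl S p \<mu>' = Some {x\<in>S. cl x = p}"
proof -
  have ex: "\<exists>r. {x\<in>S. cl x = p} = {x\<in>S. edist d x \<mu>' \<le> r}"
    using assms by blast
  show ?thesis
    using someI_ex[OF ex] ex by (simp add: phase2_def)
qed

lemma pmf_le_pmf_map: "pmf M x \<le> pmf (map_pmf f M) (f x)"
proof -
  have "measure_pmf.prob M {x} \<le> measure_pmf.prob M (f -` {f x})"
    by (rule measure_pmf.finite_measure_mono) auto
  then show ?thesis
    by (simp add: pmf_map measure_pmf_single)
qed

lemma eta_sample_size_bound:
  fixes k N :: nat and \<delta> \<gamma> :: real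
  assumes "2 \<le> k" "0 < \<delta>" "\<delta> < 1" "1 < \<gamma>" "\<gamma> < 3" "eta 256 k \<delta> \<gamma> \<le> real N"
  shows "real k * exp (1/2 - real (N + 1) * ((\<gamma> - 1) / 2)^2 / 4) \<le> \<delta> / real k"
proof -
  define G where "G = \<gamma> - 1"
  define L where "L = ln (real k) + ln (1 / \<delta>)"
  have G: "0 < G" "G^2 \<le> 4"
    using assms(4,5) power_mono[of G 2 2] by (auto simp: G_def)
  have "ln 2 \<le> ln (real k)"
    using assms(1) by simp
  then have ln_k: "1/2 \<le> ln (real k)"
    using ln2_ge_two_thirds by linarith
  have ln_\<delta>: "0 \<le> ln (1 / \<delta>)"
    using assms(2,3) by simp
  have L: "0 \<le> L"
    using ln_k ln_\<delta> by (simp add: L_def)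
  have N: "256 * L / G^4 \<le> real N"
    using assms(6) by (simp add: eta_def L_def G_def)
  have "4 * L \<le> 16 * L / G^2"
    using G L by (simp add: field_simps mult_left_mono)
  also have "\<dots> = (256 * L / G^4) * G^2 / 16"
    using G by (simp add: field_simps power2_eq_square power4_eq_xxxx)
  also have "\<dots> \<le> real N * G^2 / 16"
    using N by (intro divide_right_mono mult_right_mono) auto
  also have "\<dots> \<le> real (N + 1) * ((\<gamma> - 1) / 2)^2 / 4"
    by (simp add: G_def power_divide field_simps)
  finally have "4 * L \<le> real (N + 1) * ((\<gamma> - 1) / 2)^2 / 4" .
  moreover have "4 * L \<le> E \<Longrightarrow> 1/2 - E \<le> - (2 * ln (real k) + ln (1 / \<delta>))" for E
    using ln_k ln_\<delta> unfolding L_def by (simp add: algebra_simps)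
  ultimately have "exp (1/2 - real (N + 1) * ((\<gamma> - 1) / 2)^2 / 4) \<le> exp (- (2 * ln (real k) + ln (1 / \<delta>)))"
    by simp
  also have "- (2 * ln (real k) + ln (1 / \<delta>)) = ln (\<delta> / (real k)^2)"
    using assms(1,2) by (simp add: ln_div ln_realpow)
  also have "exp (ln (\<delta> / (real k)^2)) = \<delta> / (real k)^2"
    using assms(1,2) by simp
  finally show ?thesis
    using assms(1) by (simp add: field_simps power2_eq_square)
qed

locale margin_clustering =
  fixes d :: nat and X :: "point set" and k :: nat and cl :: "point \<Rightarrow> nat"
    and tb :: "point list \<Rightarrow> nat" and \<gamma> :: real
  assumes finite_X: "finite X"
    and labels: "\<forall>x\<in>X. cl x \<in> {1..k}"
    and clusters_nonempty: "\<forall>i\<in>{1..k}. cluster X cl i \<noteq> {}"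
    and margin: "margin_property d \<gamma> X cl k (\<lambda>i. center_of_mass (cluster X cl i))"
    and gamma_gt_1: "1 < \<gamma>"
    and tie_break: "\<forall>Z. Z \<noteq> [] \<longrightarrow> tb Z \<in> argmax_labels cl Z"
begin

text \<open>\<open>remaining R\<close> is the set \<open>S\<^sub>i\<close> of the algorithm once exactly the clusters with labels
  outside \<open>R\<close> have been removed; \<open>bad_samples R\<close> are the Phase 1 samples on which the next
  iteration does not split off a whole cluster with label in \<open>R\<close>.\<close>

definition remaining :: "nat set \<Rightarrow> point set" where
  "remaining R = {x\<in>X. cl x \<in> R}"

definition cluster_center :: "nat \<Rightarrow> point" where
  "cluster_center i = center_of_mass (cluster X cl i)"

definition cluster_radius :: "nat \<Rightarrow> real" where
  "cluster_radius i = Max ((\<lambda>x. edist d x (cluster_center i)) ` cluster X cl i)"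

definition bad_samples :: "nat set \<Rightarrow> point list set" where
  "bad_samples R = {Z. \<not> (tb Z \<in> R \<and> iteration d cl tb (remaining R) Z = Some (cluster X cl (tb Z)))}"

lemma finite_cluster: "finite (cluster X cl i)"
  using finite_X by (simp add: cluster_def)

lemma edist_le_cluster_radius:
  "x \<in> cluster X cl i \<Longrightarrow> edist d x (cluster_center i) \<le> cluster_radius i"
  unfolding cluster_radius_def by (rule Max_ge) (use finite_cluster in auto)

lemma cluster_radius_attained:
  assumes "i \<in> {1..k}"
  obtains x where "x \<in> cluster X cl i" "edist d x (cluster_center i) = cluster_radius i"
proof -
  have "cluster_radius i \<in> (\<lambda>x. edist d x (cluster_center i)) ` cluster X cl i"
    unfolding cluster_radius_def by (rule Max_in) (use finite_cluster clusters_nonempty assms in auto)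
  then show ?thesis using that by auto
qed

lemma cluster_radius_nonneg: "i \<in> {1..k} \<Longrightarrow> 0 \<le> cluster_radius i"
  by (metis cluster_radius_attained edist_nonneg)

lemma finite_remaining: "finite (remaining R)"
  using finite_X by (simp add: remaining_def)

lemma remaining_label_eq: "p \<in> R \<Longrightarrow> {x\<in>remaining R. cl x = p} = cluster X cl p"
  by (auto simp: remaining_def cluster_def)

lemma remaining_Diff_cluster: "p \<in> R \<Longrightarrow> remaining R - cluster X cl p = remaining (R - {p})"
  by (auto simp: remaining_def cluster_def)

lemma remaining_nonempty: "R \<subseteq> {1..k} \<Longrightarrow> R \<noteq> {} \<Longrightarrow> remaining R \<noteq> {}"
  using clusters_nonempty by (fastforce simp: remaining_def cluster_def)

lemma sample_expectation_far_mean_cluster_le: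
  assumes t: "t \<in> {1..k}" and "1 \<le> M" "M \<le> m" "0 < \<epsilon>"
  shows "sample_expectation (cluster X cl t) m
      (\<lambda>W. of_bool (\<epsilon> * cluster_radius t < edist d (list_mean W) (cluster_center t)))
    \<le> (if 1 \<le> \<epsilon> then 0 else exp (1/2 - M * \<epsilon>^2 / 4))"
proof -
  let ?C = "cluster X cl t" and ?r = "cluster_radius t" and ?\<mu> = "cluster_center t"
  have C: "finite ?C" "?C \<noteq> {}" "\<forall>i. (\<Sum>x\<in>?C. x i - ?\<mu> i) = 0" "\<forall>x\<in>?C. edist d x ?\<mu> \<le> ?r"
    using finite_cluster clusters_nonempty t center_of_mass_deviation_sum edist_le_cluster_radius
    by (auto simp: cluster_center_def)
  show ?thesis
  proof (cases "1 \<le> \<epsilon> \<or> ?r = 0")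
    case True
    have "sample_expectation ?C m (\<lambda>W. of_bool (\<epsilon> * ?r < edist d (list_mean W) ?\<mu>))
        = sample_expectation ?C m (\<lambda>_. 0)"
    proof (rule sample_expectation_cong)
      fix W :: "point list"
      assume W: "length W = m" "set W \<subseteq> ?C"
      then have "edist d (list_mean W) ?\<mu> \<le> ?r"
        using assms(2,3) C(4) by (intro edist_list_mean_le) auto
      moreover have "?r \<le> \<epsilon> * ?r"
        using True cluster_radius_nonneg[OF t] by (auto simp: mult_le_cancel_right1)
      ultimately show "of_bool (\<epsilon> * ?r < edist d (list_mean W) ?\<mu>) = (0::real)"
        by simp
    qed
    then show ?thesis
      using sample_expectation_const[OF C(1,2)] by simp
  next
    case False
    then have "0 < ?r"
      using cluster_radius_nonneg[OF t] by simp
    then have "sample_expectation ?C m (\<lambda>W. of_bool (\<epsilon> * ?r < edist d (list_mean W) ?\<mu>))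
        \<le> exp (1/2 - m * \<epsilon>^2 / 4)"
      using assms(2-4) by (intro sample_expectation_far_mean_le[OF C]) auto
    also have "\<dots> \<le> exp (1/2 - M * \<epsilon>^2 / 4)"
      using assms(3) by (simp add: divide_right_mono mult_right_mono)
    finally show ?thesis
      using False by simp
  qed
qed

lemma cluster_eq_ball:
  assumes p: "p \<in> {1..k}" and close: "edist d \<mu>' (cluster_center p) \<le> \<epsilon> * cluster_radius p"
    and "0 \<le> \<epsilon>" "\<epsilon> \<le> (\<gamma> - 1) / 2" and S: "S \<subseteq> X"
  shows "{x\<in>S. cl x = p} = {x\<in>S. edist d x \<mu>' \<le> (1 + \<epsilon>) * cluster_radius p}"
proof -
  let ?r = "cluster_radius p" and ?\<mu> = "cluster_center p"
  have inside: "edist d x \<mu>' \<le> (1 + \<epsilon>) * ?r" if "x \<in> S" "cl x = p" for x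
  proof -
    have "edist d x ?\<mu> \<le> ?r"
      using that S by (intro edist_le_cluster_radius) (auto simp: cluster_def)
    then show ?thesis
      using edist_triangle[of d x \<mu>' ?\<mu>] edist_commute[of d ?\<mu> \<mu>'] close
      by (simp add: algebra_simps)
  qed
  have outside: "(1 + \<epsilon>) * ?r < edist d x \<mu>'" if "x \<in> S" "cl x \<noteq> p" for x
  proof -
    obtain x0 where x0: "x0 \<in> cluster X cl p" "edist d x0 ?\<mu> = ?r"
      using cluster_radius_attained[OF p] by blast
    have "x \<in> X - cluster X cl p"
      using that S by (auto simp: cluster_def)
    then have "\<gamma> * ?r < edist d x ?\<mu>"
      using margin p x0 unfolding margin_property_def cluster_center_def by force
    moreover have "(1 + \<epsilon>) * ?r \<le> (\<gamma> - \<epsilon>) * ?r"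
      using assms(3,4) cluster_radius_nonneg[OF p] by (intro mult_right_mono) auto
    ultimately show ?thesis
      using edist_triangle[of d x ?\<mu> \<mu>'] close by (simp add: algebra_simps)
  qed
  show ?thesis
    using inside outside by force
qed

lemma majority_label:
  assumes R: "R \<subseteq> {1..k}" and Z: "length Z = k * N + 1" "set Z \<subseteq> remaining R"
  shows "tb Z \<in> R" "N + 1 \<le> label_count cl Z (tb Z)"
proof -
  have "Z \<noteq> []"
    using Z by auto
  then have most: "label_count cl Z t \<le> label_count cl Z (tb Z)" for t
    using tie_break by (simp add: argmax_labels_def)
  have labels_Z: "\<forall>z\<in>set Z. cl z \<in> R"
    using Z by (auto simp: remaining_def)
  have R_fin: "finite R" "card R \<le> k"
    using R finite_subset card_mono[OF _ R] by auto
  have "k * N + 1 = (\<Sum>t\<in>R. label_count cl Z t)"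
    using sum_label_count[OF R_fin(1) labels_Z] Z by simp
  also have "\<dots> \<le> card R * label_count cl Z (tb Z)"
    using sum_mono[of R _ "\<lambda>_. label_count cl Z (tb Z)"] most by simp
  also have "\<dots> \<le> k * label_count cl Z (tb Z)"
    using R_fin by simp
  finally have "k * N < k * label_count cl Z (tb Z)"
    by linarith
  then have "N < label_count cl Z (tb Z)"
    by (metis mult_less_cancel1)
  then show count: "N + 1 \<le> label_count cl Z (tb Z)"
    by simp
  then have "filter (\<lambda>x. cl x = tb Z) Z \<noteq> []"
    by (auto simp: label_count_def)
  then obtain z where "z \<in> set Z" "cl z = tb Z"
    by (auto simp: filter_empty_conv)
  then show "tb Z \<in> R"
    using labels_Z by auto
qed

lemma good_sample:
  assumes R: "R \<subseteq> {1..k}" and p: "tb Z \<in> R"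
    and \<epsilon>: "0 \<le> \<epsilon>" "\<epsilon> \<le> (\<gamma> - 1) / 2"
    and close: "card R = 1 \<or> edist d (list_mean (filter (\<lambda>x. cl x = tb Z) Z)) (cluster_center (tb Z))
                              \<le> \<epsilon> * cluster_radius (tb Z)"
  shows "Z \<notin> bad_samples R"
proof -
  define p where "p = tb Z"
  define \<mu>' where "\<mu>' = list_mean (filter (\<lambda>x. cl x = p) Z)"
  have "\<exists>r. {x\<in>remaining R. cl x = p} = {x\<in>remaining R. edist d x \<mu>' \<le> r}"
  proof (cases "card R = 1")
    case True
    then have "R = {p}"
      using p by (auto simp: p_def card_Suc_eq)
    moreover have "edist d x \<mu>' \<le> Max ((\<lambda>x. edist d x \<mu>') ` remaining R)" if "x \<in> remaining R" for x
      using finite_remaining that by (intro Max_ge) auto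
    ultimately show ?thesis
      by (auto simp: remaining_def)
  next
    case False
    have "{x\<in>remaining R. cl x = p} = {x\<in>remaining R. edist d x \<mu>' \<le> (1 + \<epsilon>) * cluster_radius p}"
      using close False p R \<epsilon> by (intro cluster_eq_ball) (auto simp: p_def \<mu>'_def remaining_def)
    then show ?thesis
      by blast
  qed
  then obtain r where "{x\<in>remaining R. cl x = p} = {x\<in>remaining R. edist d x \<mu>' \<le> r}"
    by blast
  then have "phase2 d cl (remaining R) p \<mu>' = Some (cluster X cl p)"
    using remaining_label_eq[OF p] by (simp add: phase2_eq_Some p_def)
  moreover have "iteration d cl tb (remaining R) Z = phase2 d cl (remaining R) p \<mu>'"
    by (simp add: iteration_def Let_def p_def \<mu>'_def)
  ultimately show ?thesis
    using p unfolding bad_samples_def p_def by simp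
qed

lemma sample_expectation_far_label_le:
  fixes N l :: nat and \<epsilon> :: real
  assumes t: "t \<in> R" and R: "R \<subseteq> {1..k}" and \<epsilon>: "0 < \<epsilon>"
  defines "B \<equiv> if 1 \<le> \<epsilon> then 0 else exp (1/2 - real (N + 1) * \<epsilon>^2 / 4)"
  shows "sample_expectation (remaining R) l (\<lambda>Z. of_bool (N + 1 \<le> label_count cl Z t
      \<and> \<epsilon> * cluster_radius t < edist d (list_mean (filter (\<lambda>x. cl x = t) Z)) (cluster_center t)))
    \<le> B"
proof -
  define g :: "point list \<Rightarrow> real" where "g W = of_bool (N + 1 \<le> length W
      \<and> \<epsilon> * cluster_radius t < edist d (list_mean W) (cluster_center t))" for W
  have "sample_expectation (cluster X cl t) m g \<le> B" for m
  proof (cases "N + 1 \<le> m")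
    case True
    have "sample_expectation (cluster X cl t) m g = sample_expectation (cluster X cl t) m
        (\<lambda>W. of_bool (\<epsilon> * cluster_radius t < edist d (list_mean W) (cluster_center t)))"
      using True by (intro sample_expectation_cong) (simp add: g_def)
    also have "\<dots> \<le> B"
      unfolding B_def using t R True \<epsilon>
      by (intro sample_expectation_far_mean_cluster_le) auto
    finally show ?thesis .
  next
    case False
    then have "sample_expectation (cluster X cl t) m g = sample_expectation (cluster X cl t) m (\<lambda>_. 0)"
      by (intro sample_expectation_cong) (simp add: g_def)
    then show ?thesis
      using sample_expectation_const[OF finite_cluster] clusters_nonempty t R
      by (auto simp: B_def)
  qed
  then have "sample_expectation (remaining R) l (\<lambda>Z. g (filter (\<lambda>x. cl x = t) Z)) \<le> B"
    using finite_remaining remaining_label_eq[OF t] clusters_nonempty t R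
    by (intro sample_expectation_filter_le) auto
  then show ?thesis
    by (simp add: g_def label_count_def)
qed

lemma prob_bad_samples_le:
  fixes N :: nat and \<epsilon> :: real
  assumes R: "R \<subseteq> {1..k}" "R \<noteq> {}" and \<epsilon>: "0 < \<epsilon>" "\<epsilon> \<le> (\<gamma> - 1) / 2"
  defines "B \<equiv> if 1 \<le> \<epsilon> then 0 else exp (1/2 - real (N + 1) * \<epsilon>^2 / 4)"
  shows "measure_pmf.prob (sample_list (remaining R) (k * N + 1)) (bad_samples R)
    \<le> (if card R = 1 then 0 else real (card R) * B)"
proof -
  let ?S = "remaining R" and ?l = "k * N + 1"
  have S: "finite ?S" "?S \<noteq> {}"
    using finite_remaining remaining_nonempty[OF R] by auto
  define far :: "nat \<Rightarrow> point list \<Rightarrow> real" where "far t Z = of_bool (N + 1 \<le> label_count cl Z t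
      \<and> \<epsilon> * cluster_radius t < edist d (list_mean (filter (\<lambda>x. cl x = t) Z)) (cluster_center t))"
    for t Z
  have bad: "card R \<noteq> 1 \<and> far (tb Z) Z = 1"
    if "length Z = ?l" "set Z \<subseteq> ?S" "Z \<in> bad_samples R" for Z
    using majority_label[OF R(1) that(1,2)] good_sample[OF R(1) _ less_imp_le[OF \<epsilon>(1)] \<epsilon>(2)] that(3)
    by (force simp: far_def)
  have "measure_pmf.prob (sample_list ?S ?l) (bad_samples R)
      = sample_expectation ?S ?l (indicator (bad_samples R))"
    by (rule prob_sample_list[OF S])
  also have "\<dots> \<le> sample_expectation ?S ?l (\<lambda>Z. if card R = 1 then 0 else \<Sum>t\<in>R. far t Z)"
  proof (rule sample_expectation_mono)
    fix Z
    assume Z: "length Z = ?l" "set Z \<subseteq> ?S"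
    have "far (tb Z) Z \<le> (\<Sum>t\<in>R. far t Z)" if "Z \<in> bad_samples R"
      using R majority_label(1)[OF R(1) Z] finite_subset[OF R(1)]
      by (intro member_le_sum) (auto simp: far_def)
    then show "indicator (bad_samples R) Z \<le> (if card R = 1 then 0 else \<Sum>t\<in>R. far t Z)"
      using bad[OF Z] by (auto simp: indicator_def far_def sum_nonneg)
  qed
  also have "\<dots> \<le> (if card R = 1 then 0 else real (card R) * B)"
  proof (cases "card R = 1")
    case True
    then show ?thesis
      using sample_expectation_const[OF S] by simp
  next
    case False
    have "sample_expectation ?S ?l (\<lambda>Z. \<Sum>t\<in>R. far t Z) \<le> (\<Sum>t\<in>R. B)"
      unfolding sample_expectation_sum far_def B_def
      using R \<epsilon> by (intro sum_mono sample_expectation_far_label_le) auto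
    then show ?thesis
      using False by simp
  qed
  finally show ?thesis .
qed

lemma run_success_prob_ge:
  assumes q: "0 \<le> q"
    and bad: "\<And>R. R \<subseteq> {1..k} \<Longrightarrow> R \<noteq> {} \<Longrightarrow>
      measure_pmf.prob (sample_list (remaining R) l) (bad_samples R) \<le> q"
  shows "R \<subseteq> {1..k} \<Longrightarrow> card R = n \<Longrightarrow>
    1 - real n * q \<le> pmf (run d cl tb l n (remaining R)) (Some (cluster X cl ` R))"
proof (induction n arbitrary: R)
  case 0
  then have "R = {}"
    using finite_subset[of R "{1..k}"] by auto
  then show ?case by simp
next
  case (Suc n)
  let ?S = "remaining R" and ?goal = "Some (cluster X cl ` R)"
  have R: "finite R" "R \<noteq> {}"
    using Suc.prems finite_subset by auto
  have S: "finite ?S" "?S \<noteq> {}"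
    using finite_remaining remaining_nonempty[OF Suc.prems(1) R(2)] by auto
  define F where "F Z = (case iteration d cl tb ?S Z of None \<Rightarrow> return_pmf None
      | Some C' \<Rightarrow> map_pmf (map_option (insert C')) (run d cl tb l n (?S - C')))" for Z
  have good: "1 - real n * q \<le> pmf (F Z) ?goal" if "Z \<notin> bad_samples R" for Z
  proof -
    have p: "tb Z \<in> R" and it: "iteration d cl tb ?S Z = Some (cluster X cl (tb Z))"
      using that by (auto simp: bad_samples_def)
    have "1 - real n * q \<le> pmf (run d cl tb l n (remaining (R - {tb Z}))) (Some (cluster X cl ` (R - {tb Z})))"
      using Suc.prems p R by (intro Suc.IH) auto
    also have "\<dots> \<le> pmf (map_pmf (map_option (insert (cluster X cl (tb Z))))
        (run d cl tb l n (remaining (R - {tb Z})))) ?goal"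
      using pmf_le_pmf_map p by (metis insert_Diff image_insert option.map(2))
    finally show ?thesis
      by (simp add: F_def it remaining_Diff_cluster[OF p])
  qed
  have "1 - real n * q - measure_pmf.prob (sample_list ?S l) (bad_samples R)
      \<le> pmf (bind_pmf (sample_list ?S l) F) ?goal"
    using S q good by (intro pmf_bind_sample_list_ge) auto
  also have "bind_pmf (sample_list ?S l) F = run d cl tb l (Suc n) ?S"
    using S unfolding F_def by simp
  finally show ?case
    using bad[OF Suc.prems(1) R(2)] by (simp add: algebra_simps)
qed

lemma prob_bad_samples_le_delta:
  assumes R: "R \<subseteq> {1..k}" "R \<noteq> {}" and \<delta>: "0 < \<delta>" "\<delta> < 1"
    and N: "eta 256 k \<delta> \<gamma> \<le> real N"
  shows "measure_pmf.prob (sample_list (remaining R) (k * N + 1)) (bad_samples R) \<le> \<delta> / real k"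
proof -
  \<comment> \<open>For \<open>\<epsilon> \<ge> 1\<close> no sample mean is far from its center, whereas for large \<open>\<gamma>\<close> the
      sample size need not be large enough for the exponential bound.\<close>
  define \<epsilon> where "\<epsilon> = min 1 ((\<gamma> - 1) / 2)"
  have \<epsilon>: "0 < \<epsilon>" "\<epsilon> \<le> (\<gamma> - 1) / 2"
    using gamma_gt_1 by (auto simp: \<epsilon>_def min_def)
  have card_R: "card R \<le> k"
    using card_mono[OF _ R(1)] by simp
  show ?thesis
  proof (cases "card R = 1 \<or> 1 \<le> \<epsilon>")
    case True
    then have "(if card R = 1 then 0 else real (card R)
        * (if 1 \<le> \<epsilon> then 0 else exp (1/2 - real (N + 1) * \<epsilon>^2 / 4))) = 0"
      by auto
    moreover have "0 \<le> \<delta> / real k"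
      using \<delta> by simp
    ultimately show ?thesis
      using prob_bad_samples_le[OF R \<epsilon>, of N] by linarith
  next
    case False
    have "card R \<noteq> 0"
      using R finite_subset[OF R(1)] by auto
    then have "2 \<le> card R" "\<epsilon> = (\<gamma> - 1) / 2" "\<gamma> < 3"
      using False by (auto simp: \<epsilon>_def min_def split: if_splits)
    then have "measure_pmf.prob (sample_list (remaining R) (k * N + 1)) (bad_samples R)
        \<le> real (card R) * exp (1/2 - real (N + 1) * ((\<gamma> - 1) / 2)^2 / 4)"
      using prob_bad_samples_le[OF R \<epsilon>, of N] False unfolding \<open>\<epsilon> = (\<gamma> - 1) / 2\<close>
      by (simp del: sample_list.simps)
    also have "\<dots> \<le> real k * exp (1/2 - real (N + 1) * ((\<gamma> - 1) / 2)^2 / 4)"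
      using card_R by (intro mult_right_mono) auto
    also have "\<dots> \<le> \<delta> / real k"
      using \<open>2 \<le> card R\<close> card_R \<delta> gamma_gt_1 \<open>\<gamma> < 3\<close> N by (intro eta_sample_size_bound) auto
    finally show ?thesis .
  qed
qed

lemma algorithm_correct:
  assumes "0 < \<delta>" "\<delta> < 1"
  shows "1 - \<delta> \<le> pmf (algorithm 256 d X cl tb k \<delta> \<gamma>) (Some (clustering X cl k))"
proof (cases "k = 0")
  case True
  then show ?thesis
    using labels assms by (simp add: algorithm_def clustering_def)
next
  case False
  define N where "N = nat \<lceil>eta 256 k \<delta> \<gamma>\<rceil>"
  have "0 \<le> eta 256 k \<delta> \<gamma>"
    using False assms gamma_gt_1 by (simp add: eta_def)
  then have "eta 256 k \<delta> \<gamma> \<le> real N"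
    by (simp add: N_def)
  then have run: "1 - real k * (\<delta> / real k)
      \<le> pmf (run d cl tb (k * N + 1) k (remaining {1..k})) (Some (cluster X cl ` {1..k}))"
    using assms by (intro run_success_prob_ge prob_bad_samples_le_delta) auto
  have "remaining {1..k} = X" "cluster X cl ` {1..k} = clustering X cl k"
    using labels by (auto simp: remaining_def clustering_def)
  moreover have "real k * (\<delta> / real k) = \<delta>"
    using False by simp
  ultimately show ?thesis
    using run unfolding algorithm_def N_def[symmetric] by presburger
qed

end

theorem theorem1:
  "\<exists>\<beta>>0. \<forall>(d::nat) (X::point set) (k::nat) (cl::point \<Rightarrow> nat) (tb::point list \<Rightarrow> nat)
      (\<gamma>::real) (\<delta>::real).
     finite X \<and> X \<subseteq> Rd d
     \<and> (\<forall>x\<in>X. cl x \<in> {1..k})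
     \<and> (\<forall>i\<in>{1..k}. cluster X cl i \<noteq> {})
     \<and> center_based d X cl k (\<lambda>i. center_of_mass (cluster X cl i))
     \<and> margin_property d \<gamma> X cl k (\<lambda>i. center_of_mass (cluster X cl i))
     \<and> 0 < \<delta> \<and> \<delta> < 1 \<and> 1 < \<gamma>
     \<and> (\<forall>Z. Z \<noteq> [] \<longrightarrow> tb Z \<in> argmax_labels cl Z)
     \<longrightarrow> pmf (algorithm \<beta> d X cl tb k \<delta> \<gamma>) (Some (clustering X cl k)) \<ge> 1 - \<delta>"
proof (intro exI[of _ 256] conjI allI impI)
  fix d :: nat and X :: "point set" and k :: nat and cl :: "point \<Rightarrow> nat"
    and tb :: "point list \<Rightarrow> nat" and \<gamma> \<delta> :: real
  assume A: "finite X \<and> X \<subseteq> Rd d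
     \<and> (\<forall>x\<in>X. cl x \<in> {1..k})
     \<and> (\<forall>i\<in>{1..k}. cluster X cl i \<noteq> {})
     \<and> center_based d X cl k (\<lambda>i. center_of_mass (cluster X cl i))
     \<and> margin_property d \<gamma> X cl k (\<lambda>i. center_of_mass (cluster X cl i))
     \<and> 0 < \<delta> \<and> \<delta> < 1 \<and> 1 < \<gamma>
     \<and> (\<forall>Z. Z \<noteq> [] \<longrightarrow> tb Z \<in> argmax_labels cl Z)"
  then interpret margin_clustering d X k cl tb \<gamma>
    by unfold_locales blast+
  thm algorithm_correct
  show "1 - \<delta> \<le> pmf (algorithm 256 d X cl tb k \<delta> \<gamma>) (Some (clustering X cl k))"
    by (rule algorithm_correct) (use A in blast)+
qed simp

end
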